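(* Let $(X,d)$ be a metric space and $A\subset X$ a subset. Let $\{\sigma_{xy}\}_{x,y\in A}$ be a collection of geodesics $\sigma_{xy}\colon[0,1]\to X$ (i.e. $d(\sigma_{xy}(s),\sigma_{xy}(t))=|s-t|\,d(x,y)$) such that $\sigma_{xy}(0)=x$, $\sigma_{xy}(1)=y$, and $\sigma_{xy}(t)=\sigma_{yx}(1-t)$ for all $t\in[0,1]$ and $x,y\in A$. If \[ d(\sigma_{xy}(t),\sigma_{xz}(t))\le t\,d(y,z) \] for all $x,y,z\in A$ and $t\in[0,1]$, then \[ d(\sigma_{x_1x_2}(t),\sigma_{y_1y_2}(t))\le W_1\big((1-t)\delta_{x_1}+t\delta_{x_2},\,(1-t)\delta_{y_1}+t\delta_{y_2}\big) \] for all $t\in[0,1]$ and $x_1,x_2,y_1,y_2\in A$.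
   Context: For Radon probability measures $\mu,\nu$ on $X$, the first Wasserstein distance is $W_1(\mu,\nu)=\inf_{\gamma}\int_{X\times X}d(x,y)\,d\gamma(x,y)$, the infimum over all couplings $\gamma$ of $(\mu,\nu)$ (probability measures on $X\times X$ with marginals $\mu$ and $\nu$). $\delta_x$ is the Dirac measure at $x$. *)

theory Defs
  imports "HOL-Probability.Probability"
begin

definition couplings :: "'a pmf \<Rightarrow> 'b pmf \<Rightarrow> ('a \<times> 'b) pmf set" where
  "couplings \<mu> \<nu> = {\<gamma>. map_pmf fst \<gamma> = \<mu> \<and> map_pmf snd \<gamma> = \<nu>}"

definition W1 :: "'a::metric_space pmf \<Rightarrow> 'a pmf \<Rightarrow> real" where
  "W1 \<mu> \<nu> = Inf ((\<lambda>\<gamma>. measure_pmf.expectation \<gamma> (\<lambda>(x, y). dist x y)) ` couplings \<mu> \<nu>)"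

text \<open>The two-point measure (1 - t) \<delta>_x + t \<delta>_y, for t in [0,1].\<close>
definition two_point :: "real \<Rightarrow> 'a \<Rightarrow> 'a \<Rightarrow> 'a pmf" where
  "two_point t x y = map_pmf (\<lambda>b. if b then y else x) (bernoulli_pmf t)"

end

theory Submission
  imports Defs
begin

text \<open>
  A coupling of two two-point measures is determined by one free parameter, and its cost is affine
  in it; hence W1 is the smaller of the costs of the two extreme couplings, the parallel one
  (sending x1 to y1 and x2 to y2) and the crossed one. Each of these costs bounds the distance
  between the t-points of the two geodesics: for the parallel cost one passes through the
  geodesic from x1 to y2 and contracts at both of its ends, for the crossed cost one passes
  through the geodesic from x1 to y1 and its reversal, which lie at distance
  \<bar>1 - 2t\<bar> d(x1, y1) from each other. The lower bound on W1 is obtained by weak Kantorovich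
  duality with explicit potentials.
\<close>

definition parallel_cost :: "real \<Rightarrow> 'a::metric_space \<Rightarrow> 'a \<Rightarrow> 'a \<Rightarrow> 'a \<Rightarrow> real" where
  "parallel_cost t x1 x2 y1 y2 = (1 - t) * dist x1 y1 + t * dist x2 y2"

definition crossed_cost :: "real \<Rightarrow> 'a::metric_space \<Rightarrow> 'a \<Rightarrow> 'a \<Rightarrow> 'a \<Rightarrow> real" where
  "crossed_cost t x1 x2 y1 y2 =
     max (1 - 2 * t) 0 * dist x1 y1 + max (2 * t - 1) 0 * dist x2 y2
     + min t (1 - t) * (dist x1 y2 + dist x2 y1)"

lemma crossed_cost_first_half:
  assumes "t \<le> 1/2"
  shows "crossed_cost t x1 x2 y1 y2 = (1 - 2 * t) * dist x1 y1 + t * (dist x1 y2 + dist x2 y1)"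
  using assms by (simp add: crossed_cost_def max_def min_def)

lemma crossed_cost_second_half:
  assumes "1/2 \<le> t"
  shows "crossed_cost t x1 x2 y1 y2 = (2 * t - 1) * dist x2 y2 + (1 - t) * (dist x1 y2 + dist x2 y1)"
proof (cases "t = 1/2")
  case True
  show ?thesis unfolding True crossed_cost_def by simp
next
  case False
  with assms show ?thesis by (simp add: crossed_cost_def max_def min_def)
qed

locale contracting_geodesic_family =
  fixes A :: "'a::metric_space set"
    and \<sigma> :: "'a \<Rightarrow> 'a \<Rightarrow> real \<Rightarrow> 'a"
  assumes geodesic: "\<And>x y s t. x \<in> A \<Longrightarrow> y \<in> A \<Longrightarrow> s \<in> {0..1} \<Longrightarrow> t \<in> {0..1} \<Longrightarrow>
        dist (\<sigma> x y s) (\<sigma> x y t) = \<bar>s - t\<bar> * dist x y"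
    and reversible: "\<And>x y t. x \<in> A \<Longrightarrow> y \<in> A \<Longrightarrow> t \<in> {0..1} \<Longrightarrow> \<sigma> x y t = \<sigma> y x (1 - t)"
    and contracting: "\<And>x y z t. x \<in> A \<Longrightarrow> y \<in> A \<Longrightarrow> z \<in> A \<Longrightarrow> t \<in> {0..1} \<Longrightarrow>
        dist (\<sigma> x y t) (\<sigma> x z t) \<le> t * dist y z"
begin

lemma dist_reversed_geodesic:
  assumes "a \<in> A" "b \<in> A" "s \<in> {0..1}"
  shows "dist (\<sigma> a b s) (\<sigma> b a s) = \<bar>1 - 2 * s\<bar> * dist a b"
  using assms reversible[of a b s] geodesic[of b a "1 - s" s] by (simp add: dist_commute)

lemma dist_le_parallel_cost:
  assumes pts: "x1 \<in> A" "x2 \<in> A" "y1 \<in> A" "y2 \<in> A" and t: "t \<in> {0..1}"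
  shows "dist (\<sigma> x1 x2 t) (\<sigma> y1 y2 t) \<le> parallel_cost t x1 x2 y1 y2"
proof -
  have "dist (\<sigma> x1 x2 t) (\<sigma> x1 y2 t) \<le> t * dist x2 y2"
    using contracting pts t by simp
  moreover have "dist (\<sigma> x1 y2 t) (\<sigma> y1 y2 t) \<le> (1 - t) * dist x1 y1"
    using contracting[of y2 x1 y1 "1 - t"] reversible[of x1 y2 t] reversible[of y1 y2 t] pts t
    by simp
  ultimately show ?thesis
    unfolding parallel_cost_def using dist_triangle[of "\<sigma> x1 x2 t" "\<sigma> y1 y2 t" "\<sigma> x1 y2 t"]
    by linarith
qed

lemma dist_le_crossed_cost_first_half:
  assumes pts: "x1 \<in> A" "x2 \<in> A" "y1 \<in> A" "y2 \<in> A" and t: "t \<in> {0..1/2}"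
  shows "dist (\<sigma> x1 x2 t) (\<sigma> y1 y2 t) \<le> (1 - 2 * t) * dist x1 y1 + t * (dist x1 y2 + dist x2 y1)"
proof -
  have t01: "t \<in> {0..1}" using t by simp
  have "dist (\<sigma> x1 x2 t) (\<sigma> y1 y2 t)
      \<le> dist (\<sigma> x1 x2 t) (\<sigma> x1 y1 t) + dist (\<sigma> x1 y1 t) (\<sigma> y1 x1 t) + dist (\<sigma> y1 x1 t) (\<sigma> y1 y2 t)"
    using dist_triangle[of "\<sigma> x1 x2 t" "\<sigma> y1 y2 t" "\<sigma> x1 y1 t"]
      dist_triangle[of "\<sigma> x1 y1 t" "\<sigma> y1 y2 t" "\<sigma> y1 x1 t"] by linarith
  also have "\<dots> \<le> t * dist x2 y1 + (1 - 2 * t) * dist x1 y1 + t * dist x1 y2"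
    using contracting[of x1 x2 y1 t] contracting[of y1 x1 y2 t] dist_reversed_geodesic[of x1 y1 t]
      pts t01 t by simp
  finally show ?thesis by (simp add: algebra_simps)
qed

lemma dist_le_crossed_cost:
  assumes pts: "x1 \<in> A" "x2 \<in> A" "y1 \<in> A" "y2 \<in> A" and t: "t \<in> {0..1}"
  shows "dist (\<sigma> x1 x2 t) (\<sigma> y1 y2 t) \<le> crossed_cost t x1 x2 y1 y2"
proof (cases "t \<le> 1/2")
  case True
  then show ?thesis
    using dist_le_crossed_cost_first_half[OF pts] t by (simp add: crossed_cost_first_half)
next
  case False
  have "dist (\<sigma> x1 x2 t) (\<sigma> y1 y2 t) = dist (\<sigma> x2 x1 (1 - t)) (\<sigma> y2 y1 (1 - t))"
    using reversible[of x1 x2 t] reversible[of y1 y2 t] pts t by simp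
  also have "\<dots> \<le> (2 * t - 1) * dist x2 y2 + (1 - t) * (dist x2 y1 + dist x1 y2)"
    using dist_le_crossed_cost_first_half[of x2 x1 y2 y1 "1 - t"] pts t False by simp
  finally show ?thesis
    using False by (simp add: crossed_cost_second_half add.commute)
qed

end

lemma set_pmf_two_point: "set_pmf (two_point t a b) \<subseteq> {a, b}"
  unfolding two_point_def by auto

lemma expectation_two_point:
  assumes "t \<in> {0..1}"
  shows "measure_pmf.expectation (two_point t a b) f = (1 - t) * f a + t * (f b :: real)"
  using assms unfolding two_point_def by (simp add: algebra_simps)

lemma couplings_nonempty: "couplings \<mu> \<nu> \<noteq> {}"
  unfolding couplings_def using map_fst_pair_pmf map_snd_pair_pmf by blast

lemma set_pmf_coupling:
  assumes "\<gamma> \<in> couplings \<mu> \<nu>"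
  shows "set_pmf \<gamma> \<subseteq> set_pmf \<mu> \<times> set_pmf \<nu>"
  using assms unfolding couplings_def by force

lemma potentials_le_W1:
  fixes \<phi> \<psi> :: "'a::metric_space \<Rightarrow> real"
  assumes fin: "finite (set_pmf \<mu>)" "finite (set_pmf \<nu>)"
    and pot: "\<And>x y. x \<in> set_pmf \<mu> \<Longrightarrow> y \<in> set_pmf \<nu> \<Longrightarrow> \<phi> x + \<psi> y \<le> dist x y"
  shows "measure_pmf.expectation \<mu> \<phi> + measure_pmf.expectation \<nu> \<psi> \<le> W1 \<mu> \<nu>"
  unfolding W1_def
proof (rule cInf_greatest)
  show "(\<lambda>\<gamma>. measure_pmf.expectation \<gamma> (\<lambda>(x, y). dist x y)) ` couplings \<mu> \<nu> \<noteq> {}"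
    using couplings_nonempty by blast
next
  fix c assume "c \<in> (\<lambda>\<gamma>. measure_pmf.expectation \<gamma> (\<lambda>(x, y). dist x y)) ` couplings \<mu> \<nu>"
  then obtain \<gamma> where \<gamma>: "\<gamma> \<in> couplings \<mu> \<nu>"
    and c: "c = measure_pmf.expectation \<gamma> (\<lambda>(x, y). dist x y)" by blast
  have supp: "set_pmf \<gamma> \<subseteq> set_pmf \<mu> \<times> set_pmf \<nu>" by (rule set_pmf_coupling[OF \<gamma>])
  then have fin\<gamma>: "finite (set_pmf \<gamma>)" using fin by (metis finite_SigmaI finite_subset)
  have marginals: "map_pmf fst \<gamma> = \<mu>" "map_pmf snd \<gamma> = \<nu>"
    using \<gamma> unfolding couplings_def by auto
  have "measure_pmf.expectation \<mu> \<phi> + measure_pmf.expectation \<nu> \<psi>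
      = measure_pmf.expectation \<gamma> (\<lambda>p. \<phi> (fst p)) + measure_pmf.expectation \<gamma> (\<lambda>p. \<psi> (snd p))"
    using marginals by auto
  also have "\<dots> = measure_pmf.expectation \<gamma> (\<lambda>p. \<phi> (fst p) + \<psi> (snd p))"
    by (intro Bochner_Integration.integral_add[symmetric] integrable_measure_pmf_finite[OF fin\<gamma>])
  also have "\<dots> \<le> c"
    unfolding c using supp pot
    by (intro integral_mono_AE integrable_measure_pmf_finite[OF fin\<gamma>])
      (auto simp: AE_measure_pmf_iff)
  finally show "measure_pmf.expectation \<mu> \<phi> + measure_pmf.expectation \<nu> \<psi> \<le> c" .
qed

lemma potentials_le_W1_two_point:
  fixes \<phi> \<psi> :: "'a::metric_space \<Rightarrow> real"
  assumes t: "t \<in> {0..1}"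
    and pot: "\<And>x y. x \<in> {x1, x2} \<Longrightarrow> y \<in> {y1, y2} \<Longrightarrow> \<phi> x + \<psi> y \<le> dist x y"
  shows "(1 - t) * \<phi> x1 + t * \<phi> x2 + ((1 - t) * \<psi> y1 + t * \<psi> y2)
         \<le> W1 (two_point t x1 x2) (two_point t y1 y2)"
proof -
  have fin: "finite (set_pmf (two_point t a b))" for a b :: 'a
    by (rule finite_subset[OF set_pmf_two_point]) simp
  have "\<phi> x + \<psi> y \<le> dist x y"
    if "x \<in> set_pmf (two_point t x1 x2)" "y \<in> set_pmf (two_point t y1 y2)" for x y
    using pot that set_pmf_two_point by (meson subsetD)
  from potentials_le_W1[OF fin fin this] show ?thesis
    unfolding expectation_two_point[OF t] .
qed

lemma min_costs_le_W1_two_point: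
  assumes t: "t \<in> {0..1}"
  shows "min (parallel_cost t x1 x2 y1 y2) (crossed_cost t x1 x2 y1 y2)
         \<le> W1 (two_point t x1 x2) (two_point t y1 y2)"
proof (cases "dist x1 y1 + dist x2 y2 \<le> dist x1 y2 + dist x2 y1")
  \<comment> \<open>In each case the potentials are tight on the support of the cheaper extreme coupling.
    If x1 = x2 or y1 = y2 the case condition holds with equality, and the potentials of the
    first case stay well defined.\<close>
  case True
  let ?\<phi> = "\<lambda>x. if x = x1 then 0 else dist x2 y1 - dist x1 y1"
  let ?\<psi> = "\<lambda>y. if y = y1 then dist x1 y1 else dist x1 y1 + dist x2 y2 - dist x2 y1"
  have "(1 - t) * ?\<phi> x1 + t * ?\<phi> x2 + ((1 - t) * ?\<psi> y1 + t * ?\<psi> y2)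
      \<le> W1 (two_point t x1 x2) (two_point t y1 y2)"
    by (rule potentials_le_W1_two_point[OF t]) (use True in auto)
  moreover have "?\<phi> x2 = dist x2 y1 - dist x1 y1"
    by (cases "x2 = x1") simp_all
  moreover have "?\<psi> y2 = dist x1 y1 + dist x2 y2 - dist x2 y1"
    by (cases "y2 = y1") simp_all
  ultimately show ?thesis
    by (simp add: parallel_cost_def algebra_simps)
next
  case False
  then have distinct: "x1 \<noteq> x2" "y1 \<noteq> y2" by auto
  show ?thesis
  proof (cases "t \<le> 1/2")
    case True
    let ?\<phi> = "\<lambda>x. if x = x1 then 0 else dist x2 y1 - dist x1 y1"
    let ?\<psi> = "\<lambda>y. if y = y1 then dist x1 y1 else dist x1 y2"
    have "(1 - t) * ?\<phi> x1 + t * ?\<phi> x2 + ((1 - t) * ?\<psi> y1 + t * ?\<psi> y2)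
        \<le> W1 (two_point t x1 x2) (two_point t y1 y2)"
      by (rule potentials_le_W1_two_point[OF t]) (use False in auto)
    then show ?thesis
      using True distinct by (simp add: crossed_cost_first_half algebra_simps)
  next
    case t_large: False
    let ?\<phi> = "\<lambda>x. if x = x1 then dist x1 y2 - dist x2 y2 else 0"
    let ?\<psi> = "\<lambda>y. if y = y1 then dist x2 y1 else dist x2 y2"
    have "(1 - t) * ?\<phi> x1 + t * ?\<phi> x2 + ((1 - t) * ?\<psi> y1 + t * ?\<psi> y2)
        \<le> W1 (two_point t x1 x2) (two_point t y1 y2)"
      by (rule potentials_le_W1_two_point[OF t]) (use False in \<open>auto simp: dist_commute\<close>)
    then show ?thesis
      using t_large distinct by (simp add: crossed_cost_second_half algebra_simps)
  qed
qed

theorem lemma3p1: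
  fixes A :: "'a::metric_space set"
    and \<sigma> :: "'a \<Rightarrow> 'a \<Rightarrow> real \<Rightarrow> 'a"
  assumes geod: "\<And>x y s t. x \<in> A \<Longrightarrow> y \<in> A \<Longrightarrow> s \<in> {0..1} \<Longrightarrow> t \<in> {0..1} \<Longrightarrow>
        dist (\<sigma> x y s) (\<sigma> x y t) = \<bar>s - t\<bar> * dist x y"
    and start: "\<And>x y. x \<in> A \<Longrightarrow> y \<in> A \<Longrightarrow> \<sigma> x y 0 = x"
    and endp: "\<And>x y. x \<in> A \<Longrightarrow> y \<in> A \<Longrightarrow> \<sigma> x y 1 = y"
    and rev: "\<And>x y t. x \<in> A \<Longrightarrow> y \<in> A \<Longrightarrow> t \<in> {0..1} \<Longrightarrow> \<sigma> x y t = \<sigma> y x (1 - t)"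
    and contr: "\<And>x y z t. x \<in> A \<Longrightarrow> y \<in> A \<Longrightarrow> z \<in> A \<Longrightarrow> t \<in> {0..1} \<Longrightarrow>
        dist (\<sigma> x y t) (\<sigma> x z t) \<le> t * dist y z"
    and t: "t \<in> {0..1}"
    and pts: "x1 \<in> A" "x2 \<in> A" "y1 \<in> A" "y2 \<in> A"
  shows "dist (\<sigma> x1 x2 t) (\<sigma> y1 y2 t) \<le> W1 (two_point t x1 x2) (two_point t y1 y2)"
proof -
  interpret contracting_geodesic_family A \<sigma>
    using geod rev contr by unfold_locales
  have "dist (\<sigma> x1 x2 t) (\<sigma> y1 y2 t) \<le> min (parallel_cost t x1 x2 y1 y2) (crossed_cost t x1 x2 y1 y2)"
    using dist_le_parallel_cost[OF pts t] dist_le_crossed_cost[OF pts t] by simp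
  also have "\<dots> \<le> W1 (two_point t x1 x2) (two_point t y1 y2)"
    by (rule min_costs_le_W1_two_point[OF t])
  finally show ?thesis .
qed

end
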